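(* Let $p$ be any prime, $G=SL(2,\mathbb{Z}_p)$, $T=\{F\in SL(2,\mathbb{Z}_p):\mathrm{Tr}(F)\neq 2\pmod p\}$ and $\Gamma=\Gamma(G,T)$. Then the independence number satisfies $p\leq\alpha(\Gamma)\leq p+1$.
   Context: The Cayley graph $\Gamma(G,T)$ has vertex set $G$ and an edge between $g_1,g_2$ iff $g_1^{-1}g_2\in T$. An independent set is a set of pairwise non-adjacent vertices; $\alpha(\Gamma)$ is the largest size of an independent set. *)

theory Defs
  imports "HOL-Computational_Algebra.Primes"
begin

text \<open>2x2 matrices over Z_p, represented as quadruples (a,b,c,d) of integers
  standing for the matrix [[a,b],[c,d]], with entries reduced to {0..<p}.\<close>

type_synonym mat2 = "int \<times> int \<times> int \<times> int"

definition SL2 :: "int \<Rightarrow> mat2 set" where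
  "SL2 p = {(a,b,c,d). a \<in> {0..<p} \<and> b \<in> {0..<p} \<and> c \<in> {0..<p} \<and> d \<in> {0..<p}
                        \<and> (a*d - b*c) mod p = 1 mod p}"

fun mmul :: "int \<Rightarrow> mat2 \<Rightarrow> mat2 \<Rightarrow> mat2" where
  "mmul p (a,b,c,d) (e,f,g,h) =
     ((a*e + b*g) mod p, (a*f + b*h) mod p, (c*e + d*g) mod p, (c*f + d*h) mod p)"

fun mtrace :: "mat2 \<Rightarrow> int" where
  "mtrace (a,b,c,d) = a + d"

definition Tset :: "int \<Rightarrow> mat2 set" where
  "Tset p = {F \<in> SL2 p. mtrace F mod p \<noteq> 2 mod p}"

definition cayley_adj :: "int \<Rightarrow> mat2 \<Rightarrow> mat2 \<Rightarrow> bool" where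
  "cayley_adj p g1 g2 \<longleftrightarrow> (\<exists>t \<in> Tset p. mmul p g1 t = g2)"

definition independent_set :: "int \<Rightarrow> mat2 set \<Rightarrow> bool" where
  "independent_set p S \<longleftrightarrow> S \<subseteq> SL2 p \<and>
     (\<forall>x\<in>S. \<forall>y\<in>S. x \<noteq> y \<longrightarrow> \<not> cayley_adj p x y)"

definition independence_number :: "int \<Rightarrow> nat" where
  "independence_number p = Max {card S | S. independent_set p S}"

end

theory Submission
  imports Defs "HOL-Library.Product_Plus"
begin

text \<open>For \<open>x, y \<in> SL(2,p)\<close> one has \<open>det (x - y) = 2 - tr (x\<inverse> y)\<close>, so distinct vertices are
  non-adjacent exactly when their difference is singular. Fix \<open>x\<^sub>0\<close> in an independent set \<open>S\<close>:
  the matrices \<open>x\<^sub>0\<inverse> (y - x\<^sub>0)\<close>, \<open>y \<in> S\<close>, are nilpotent with pairwise singular differences.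
  On trace-zero matrices \<open>-det\<close> is a quadratic form, so its polarisation vanishes on any two of them,
  which forces them to be proportional. Hence \<open>S\<close> lies on an affine line of \<open>\<int>\<^sub>p\<^sup>4\<close> and
  \<open>|S| \<le> p\<close>; the \<open>p\<close> upper unitriangular matrices attain this, so \<open>\<alpha>(\<Gamma>) = p\<close>.\<close>

text \<open>The operations below act on unreduced integer matrices; congruences modulo \<open>p\<close> are
  expressed with \<open>dvd\<close>, and \<open>mreduce\<close> links them to the reduced product \<open>mmul\<close>.\<close>

fun det2 :: "mat2 \<Rightarrow> int" where
  "det2 (a,b,c,d) = a*d - b*c"

fun adj2 :: "mat2 \<Rightarrow> mat2" where
  "adj2 (a,b,c,d) = (d, -b, -c, a)"

fun mtranspose :: "mat2 \<Rightarrow> mat2" where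
  "mtranspose (a,b,c,d) = (a, c, b, d)"

fun mprod :: "mat2 \<Rightarrow> mat2 \<Rightarrow> mat2" where
  "mprod (a,b,c,d) (e,f,g,h) = (a*e + b*g, a*f + b*h, c*e + d*g, c*f + d*h)"

fun smult2 :: "int \<Rightarrow> mat2 \<Rightarrow> mat2" where
  "smult2 k (a,b,c,d) = (k*a, k*b, k*c, k*d)"

fun mreduce :: "int \<Rightarrow> mat2 \<Rightarrow> mat2" where
  "mreduce p (a,b,c,d) = (a mod p, b mod p, c mod p, d mod p)"

fun mdot :: "mat2 \<Rightarrow> mat2 \<Rightarrow> int" where
  "mdot (a,b,c,d) (e,f,g,h) = a*e + b*f + c*g + d*h"

lemma det2_mprod: "det2 (mprod x y) = det2 x * det2 y"
  by (cases x; cases y) (simp add: algebra_simps)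

lemma det2_adj2: "det2 (adj2 x) = det2 x"
  by (cases x) simp

lemma det2_diff_commute: "det2 (x - y) = det2 (y - x)"
  by (cases x; cases y) (simp add: algebra_simps)

lemma det2_diff: "det2 (x - y) = det2 x + det2 y - mtrace (mprod (adj2 x) y)"
  by (cases x; cases y) (simp add: algebra_simps)

lemma mtrace_diff: "mtrace (x - y) = mtrace x - mtrace y"
  by (cases x; cases y) simp

lemma mtrace_adj2_self: "mtrace (mprod (adj2 x) x) = 2 * det2 x"
  by (cases x) simp

lemma mprod_diff_right: "mprod x (y - z) = mprod x y - mprod x z"
  by (cases x; cases y; cases z) (simp add: algebra_simps)

lemma mprod_adj2_left: "mprod (adj2 x) (mprod x y) = smult2 (det2 x) y"
  by (cases x; cases y) (simp add: algebra_simps)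

lemma mprod_adj2_right: "mprod x (mprod (adj2 x) y) = smult2 (det2 x) y"
  by (cases x; cases y) (simp add: algebra_simps)

lemma mdot_diff: "mdot w (x - y) = mdot w x - mdot w y"
  by (cases w; cases x; cases y) (simp add: algebra_simps)

lemma mdot_smult2: "mdot w (smult2 k x) = k * mdot w x"
  by (cases w; cases x) (simp add: algebra_simps)

lemma mdot_mprod: "mdot w (mprod x y) = mdot (mprod (mtranspose x) w) y"
  by (cases w; cases x; cases y) (simp add: algebra_simps)

lemma mmul_eq_mreduce_mprod: "mmul p x y = mreduce p (mprod x y)"
  by (cases x; cases y) simp

lemma mreduce_mprod_mreduce: "mreduce p (mprod x (mreduce p y)) = mreduce p (mprod x y)"
proof -
  have "(a * (e mod p) + b * (g mod p)) mod p = (a * e + b * g) mod p" for a b e g :: int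
    by (metis mod_add_eq mod_mult_right_eq)
  then show ?thesis
    by (cases x; cases y) simp
qed

lemma mreduce_smult2: "k mod p = 1 mod p \<Longrightarrow> mreduce p (smult2 k x) = mreduce p x"
  by (cases x) (metis mreduce.simps smult2.simps mod_mult_left_eq mult_1)

lemma mtrace_mreduce: "mtrace (mreduce p x) mod p = mtrace x mod p"
  by (cases x) (simp add: mod_add_eq)

lemma det2_mreduce: "det2 (mreduce p x) mod p = det2 x mod p"
  by (cases x) (metis det2.simps mreduce.simps mod_diff_eq mod_mult_eq)

lemma SL2_det2: "x \<in> SL2 p \<Longrightarrow> det2 x mod p = 1 mod p"
  by (cases x) (simp add: SL2_def)

lemma mreduce_SL2: "x \<in> SL2 p \<Longrightarrow> mreduce p x = x"
  by (cases x) (simp add: SL2_def)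

lemma mreduce_in_SL2:
  assumes "p > 0" "det2 x mod p = 1 mod p"
  shows "mreduce p x \<in> SL2 p"
  using assms det2_mreduce[of p x] by (cases x) (simp add: SL2_def)

lemma SL2_eq_if_mdot_dvd:
  assumes "x \<in> SL2 p" "y \<in> SL2 p" "\<forall>w. p dvd mdot w (x - y)"
  shows "x = y"
proof -
  have "mdot w x mod p = mdot w y mod p" for w
    using assms(3)[rule_format, of w] by (simp add: mdot_diff mod_eq_dvd_iff)
  from this[of "(1, 0, 0, 0)"] this[of "(0, 1, 0, 0)"] this[of "(0, 0, 1, 0)"] this[of "(0, 0, 0, 1)"]
  have "mreduce p x = mreduce p y"
    by (cases x; cases y) simp
  then show ?thesis
    using assms(1,2) by (simp add: mreduce_SL2)
qed

lemma finite_SL2: "finite (SL2 p)"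
proof (rule finite_subset)
  show "SL2 p \<subseteq> {0..<p} \<times> {0..<p} \<times> {0..<p} \<times> {0..<p}"
    unfolding SL2_def by auto
qed simp

lemma mmul_SL2_eq_iff:
  assumes x: "x \<in> SL2 p" and y: "y \<in> SL2 p" and t: "t \<in> SL2 p"
  shows "mmul p x t = y \<longleftrightarrow> t = mreduce p (mprod (adj2 x) y)"
proof
  assume "mmul p x t = y"
  then have "mreduce p (mprod (adj2 x) y) = mreduce p (mprod (adj2 x) (mprod x t))"
    by (metis mmul_eq_mreduce_mprod mreduce_mprod_mreduce)
  also have "\<dots> = t"
    using x t by (simp add: mprod_adj2_left mreduce_smult2 SL2_det2 mreduce_SL2)
  finally show "t = mreduce p (mprod (adj2 x) y)" ..
next
  assume "t = mreduce p (mprod (adj2 x) y)"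
  then have "mmul p x t = mreduce p (mprod x (mprod (adj2 x) y))"
    by (simp add: mmul_eq_mreduce_mprod mreduce_mprod_mreduce)
  also have "\<dots> = y"
    using x y by (simp add: mprod_adj2_right mreduce_smult2 SL2_det2 mreduce_SL2)
  finally show "mmul p x t = y" .
qed

lemma det2_diff_SL2:
  assumes "x \<in> SL2 p" "y \<in> SL2 p"
  shows "p dvd det2 (x - y) + (mtrace (mprod (adj2 x) y) - 2)"
proof -
  have "(det2 (x - y) + mtrace (mprod (adj2 x) y)) mod p = (det2 x + det2 y) mod p"
    by (simp add: det2_diff)
  also have "\<dots> = (det2 x mod p + det2 y mod p) mod p"
    by (simp add: mod_add_eq)
  also have "\<dots> = 2 mod p"
    using assms by (simp add: SL2_det2 mod_mult_right_eq)
  finally show ?thesis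
    by (simp add: mod_eq_dvd_iff algebra_simps)
qed

lemma cayley_adj_iff_det2_diff:
  assumes "p > 0" and x: "x \<in> SL2 p" and y: "y \<in> SL2 p"
  shows "cayley_adj p x y \<longleftrightarrow> \<not> p dvd det2 (x - y)"
proof -
  define t where "t = mreduce p (mprod (adj2 x) y)"
  have "det2 (mprod (adj2 x) y) mod p = (det2 x mod p * (det2 y mod p)) mod p"
    by (simp add: det2_mprod det2_adj2 mod_mult_eq)
  also have "\<dots> = 1 mod p"
    using x y by (simp add: SL2_det2 mod_mult_eq)
  finally have "det2 (mprod (adj2 x) y) mod p = 1 mod p" .
  then have t: "t \<in> SL2 p"
    unfolding t_def using mreduce_in_SL2 \<open>p > 0\<close> by blast
  have "mmul p x t' = y \<longleftrightarrow> t' = t" if "t' \<in> Tset p" for t'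
    using mmul_SL2_eq_iff[OF x y] that unfolding Tset_def t_def by blast
  then have "cayley_adj p x y \<longleftrightarrow> t \<in> Tset p"
    unfolding cayley_adj_def by blast
  also have "\<dots> \<longleftrightarrow> mtrace t mod p \<noteq> 2 mod p"
    using t unfolding Tset_def by blast
  also have "\<dots> \<longleftrightarrow> \<not> p dvd mtrace (mprod (adj2 x) y) - 2"
    unfolding t_def mtrace_mreduce by (simp add: mod_eq_dvd_iff)
  also have "\<dots> \<longleftrightarrow> \<not> p dvd det2 (x - y)"
    using det2_diff_SL2[OF x y] dvd_add_right_iff dvd_add_left_iff by blast
  finally show ?thesis .
qed

lemma independent_set_iff_singular_differences:
  assumes "p > 0"
  shows "independent_set p S \<longleftrightarrow> S \<subseteq> SL2 p \<and> (\<forall>x\<in>S. \<forall>y\<in>S. p dvd det2 (x - y))"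
proof -
  have "p dvd det2 (x - y) \<longleftrightarrow> x \<noteq> y \<longrightarrow> \<not> cayley_adj p x y" if "x \<in> SL2 p" "y \<in> SL2 p" for x y
  proof (cases "x = y")
    case True
    then show ?thesis
      by (cases x) (simp add: zero_prod_def)
  qed (simp add: cayley_adj_iff_det2_diff[OF assms that])
  then show ?thesis
    unfolding independent_set_def by (meson subsetD)
qed

text \<open>Linear dependence of \<open>u\<close> and \<open>v\<close> as vectors of \<open>\<int>\<^sub>p\<^sup>4\<close>, tested against all pairs of
  linear functionals \<open>mdot w\<close>.\<close>

definition parallel_mod :: "int \<Rightarrow> mat2 \<Rightarrow> mat2 \<Rightarrow> bool" where
  "parallel_mod p u v \<longleftrightarrow> (\<forall>w w'. p dvd mdot w u * mdot w' v - mdot w' u * mdot w v)"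

lemma parallel_mod_if_minors:
  fixes u1 u2 u3 u4 v1 v2 v3 v4 :: int
  assumes "p dvd u1*v2 - u2*v1" "p dvd u1*v3 - u3*v1" "p dvd u1*v4 - u4*v1"
    and "p dvd u2*v3 - u3*v2" "p dvd u2*v4 - u4*v2" "p dvd u3*v4 - u4*v3"
  shows "parallel_mod p (u1, u2, u3, u4) (v1, v2, v3, v4)"
  unfolding parallel_mod_def
proof (intro allI)
  fix w w' :: mat2
  obtain a1 a2 a3 a4 where w: "w = (a1, a2, a3, a4)" by (cases w) auto
  obtain b1 b2 b3 b4 where w': "w' = (b1, b2, b3, b4)" by (cases w') auto
  have "mdot w (u1, u2, u3, u4) * mdot w' (v1, v2, v3, v4) - mdot w' (u1, u2, u3, u4) * mdot w (v1, v2, v3, v4)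
      = (a1*b2 - a2*b1) * (u1*v2 - u2*v1) + (a1*b3 - a3*b1) * (u1*v3 - u3*v1)
      + (a1*b4 - a4*b1) * (u1*v4 - u4*v1) + (a2*b3 - a3*b2) * (u2*v3 - u3*v2)
      + (a2*b4 - a4*b2) * (u2*v4 - u4*v2) + (a3*b4 - a4*b3) * (u3*v4 - u4*v3)"
    unfolding w w' mdot.simps by algebra \<comment> \<open>Cauchy--Binet for \<open>2 \<times> 2\<close> minors\<close>
  then show "p dvd mdot w (u1, u2, u3, u4) * mdot w' (v1, v2, v3, v4)
                 - mdot w' (u1, u2, u3, u4) * mdot w (v1, v2, v3, v4)"
    using assms by simp
qed

lemma parallel_mod_diff_right:
  assumes "parallel_mod p u v" "parallel_mod p u v'"
  shows "parallel_mod p u (v - v')"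
  unfolding parallel_mod_def
proof (intro allI)
  fix w w'
  have "mdot w u * mdot w' (v - v') - mdot w' u * mdot w (v - v')
      = (mdot w u * mdot w' v - mdot w' u * mdot w v) - (mdot w u * mdot w' v' - mdot w' u * mdot w v')"
    by (simp add: mdot_diff algebra_simps)
  moreover have "p dvd mdot w u * mdot w' v - mdot w' u * mdot w v"
    "p dvd mdot w u * mdot w' v' - mdot w' u * mdot w v'"
    using assms unfolding parallel_mod_def by blast+
  ultimately show "p dvd mdot w u * mdot w' (v - v') - mdot w' u * mdot w (v - v')"
    by (simp only:) (rule dvd_diff)
qed

lemma parallel_mod_dvd_mdot:
  assumes "prime p" "parallel_mod p u v" "\<not> p dvd mdot w u" "p dvd mdot w v"
  shows "p dvd mdot w' v"
proof -
  have "p dvd mdot w u * mdot w' v - mdot w' u * mdot w v"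
    using assms(2) unfolding parallel_mod_def by blast
  moreover have "p dvd mdot w' u * mdot w v"
    using assms(4) by (rule dvd_mult)
  ultimately have "p dvd (mdot w u * mdot w' v - mdot w' u * mdot w v) + mdot w' u * mdot w v"
    by (rule dvd_add)
  then have "p dvd mdot w u * mdot w' v"
    by simp
  then show ?thesis
    using assms(1,3) by (simp add: prime_dvd_mult_iff)
qed

lemma parallel_mod_cancel_adj2:
  assumes "prime p" "\<not> p dvd det2 x"
    and "parallel_mod p (mprod (adj2 x) u) (mprod (adj2 x) v)"
  shows "parallel_mod p u v"
  unfolding parallel_mod_def
proof (intro allI)
  fix w w'
  have transport: "mdot (mprod (mtranspose x) w) (mprod (adj2 x) u) = det2 x * mdot w u" for w u
    by (simp add: mdot_mprod[symmetric] mprod_adj2_right mdot_smult2)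
  have "p dvd mdot (mprod (mtranspose x) w) (mprod (adj2 x) u) * mdot (mprod (mtranspose x) w') (mprod (adj2 x) v)
      - mdot (mprod (mtranspose x) w') (mprod (adj2 x) u) * mdot (mprod (mtranspose x) w) (mprod (adj2 x) v)"
    using assms(3) unfolding parallel_mod_def by blast
  then have "p dvd (det2 x * mdot w u) * (det2 x * mdot w' v) - (det2 x * mdot w' u) * (det2 x * mdot w v)"
    by (simp only: transport)
  also have "(det2 x * mdot w u) * (det2 x * mdot w' v) - (det2 x * mdot w' u) * (det2 x * mdot w v)
      = det2 x * (det2 x * (mdot w u * mdot w' v - mdot w' u * mdot w v))"
    by (simp add: algebra_simps)
  finally show "p dvd mdot w u * mdot w' v - mdot w' u * mdot w v"
    using assms(1,2) by (simp add: prime_dvd_mult_iff)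
qed

lemma isotropic_pair_minors:
  fixes m n q m' n' q' :: int
  assumes "prime p"
    and "p dvd m^2 + n*q" "p dvd m'^2 + n'*q'" "p dvd 2*m*m' + n*q' + q*n'"
  shows "p dvd m*n' - n*m'" and "p dvd m*q' - q*m'" and "p dvd n*q' - q*n'"
proof -
  define A A' B where "A = m^2 + n*q" and "A' = m'^2 + n'*q'" and "B = 2*m*m' + n*q' + q*n'"
  have dvd: "p dvd A" "p dvd A'" "p dvd B"
    using assms(2-4) unfolding A_def A'_def B_def by simp_all
  have dvd_of_square: "p dvd x" if "x^2 = y" "p dvd y" for x y :: int
    using that \<open>prime p\<close> prime_dvd_power by blast
  show "p dvd m*n' - n*m'"
  proof (rule dvd_of_square)
    show "(m*n' - n*m')^2 = A*n'^2 + A'*n^2 - n*n'*B"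
      unfolding A_def A'_def B_def by algebra
  qed (use dvd in \<open>intro dvd_diff dvd_add dvd_mult2 dvd_mult\<close>)
  show "p dvd m*q' - q*m'"
  proof (rule dvd_of_square)
    show "(m*q' - q*m')^2 = A*q'^2 + A'*q^2 - q*q'*B"
      unfolding A_def A'_def B_def by algebra
  qed (use dvd in \<open>intro dvd_diff dvd_add dvd_mult2 dvd_mult\<close>)
  show "p dvd n*q' - q*n'"
  proof (rule dvd_of_square)
    show "(n*q' - q*n')^2 = B*(B - 4*m*m') - 4*A*A' + 4*A*m'^2 + 4*A'*m^2"
      unfolding A_def A'_def B_def by algebra
  qed (use dvd in \<open>intro dvd_diff dvd_add dvd_mult2 dvd_mult\<close>)
qed

lemma nilpotent_parallel_mod:
  assumes "prime p"
    and "p dvd mtrace M" "p dvd det2 M" "p dvd mtrace N" "p dvd det2 N"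
    and "p dvd det2 (M - N)"
  shows "parallel_mod p M N"
proof -
  obtain m n q r where M: "M = (m, n, q, r)" by (cases M) auto
  obtain m' n' q' r' where N: "N = (m', n', q', r')" by (cases N) auto
  have tr: "p dvd m + r" "p dvd m' + r'"
    and det: "p dvd m*r - n*q" "p dvd m'*r' - n'*q'"
    and det_diff: "p dvd (m - m')*(r - r') - (n - n')*(q - q')"
    using assms(2-6) unfolding M N by simp_all
  txt \<open>On trace-zero matrices \<open>-det\<close> is the quadratic form \<open>m\<^sup>2 + n q\<close>; it vanishes at \<open>M\<close>, \<open>N\<close>
    and \<open>M - N\<close>, hence so does its polarisation.\<close>
  have "m^2 + n*q = m*(m + r) - (m*r - n*q)"
    by algebra
  then have A: "p dvd m^2 + n*q"
    using tr det by (simp only:) (blast intro: dvd_diff dvd_mult)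
  have "m'^2 + n'*q' = m'*(m' + r') - (m'*r' - n'*q')"
    by algebra
  then have A': "p dvd m'^2 + n'*q'"
    using tr det by (simp only:) (blast intro: dvd_diff dvd_mult)
  have "2*m*m' + n*q' + q*n' = ((m - m')*(r - r') - (n - n')*(q - q'))
      - (m - m')*((m + r) - (m' + r')) + (m^2 + n*q) + (m'^2 + n'*q')"
    by algebra
  then have B: "p dvd 2*m*m' + n*q' + q*n'"
    using tr det_diff A A' by (simp only:) (blast intro: dvd_add dvd_diff dvd_mult)
  note minors = isotropic_pair_minors[OF \<open>prime p\<close> A A' B]
  have "m*r' - r*m' = m*(m' + r') - m'*(m + r)"
    by algebra
  then have mr: "p dvd m*r' - r*m'"
    using tr by (simp only:) (blast intro: dvd_diff dvd_mult)
  have "n*r' - r*n' = (n*(m' + r') - n'*(m + r)) + (m*n' - n*m')"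
    by algebra
  then have nr: "p dvd n*r' - r*n'"
    using tr minors by (simp only:) (blast intro: dvd_add dvd_diff dvd_mult)
  have "q*r' - r*q' = (q*(m' + r') - q'*(m + r)) + (m*q' - q*m')"
    by algebra
  then have qr: "p dvd q*r' - r*q'"
    using tr minors by (simp only:) (blast intro: dvd_add dvd_diff dvd_mult)
  show ?thesis
    unfolding M N using minors(1,2) mr minors(3) nr qr by (rule parallel_mod_if_minors)
qed

lemma SL2_singular_differences_parallel:
  assumes "prime p" and x: "x \<in> SL2 p" and y: "y \<in> SL2 p" and z: "z \<in> SL2 p"
    and xy: "p dvd det2 (x - y)" and xz: "p dvd det2 (x - z)" and yz: "p dvd det2 (y - z)"
  shows "parallel_mod p (y - x) (z - x)"
proof -
  have det_x: "p dvd det2 x - 1"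
    using SL2_det2[OF x] by (simp add: mod_eq_dvd_iff)
  have "\<not> p dvd det2 x"
  proof
    assume "p dvd det2 x"
    then have "p dvd det2 x - (det2 x - 1)"
      using det_x by (rule dvd_diff)
    then show False
      using \<open>prime p\<close> not_prime_unit by auto
  qed
  have nilpotent: "p dvd mtrace (mprod (adj2 x) (y' - x)) \<and> p dvd det2 (mprod (adj2 x) (y' - x))"
    if "y' \<in> SL2 p" "p dvd det2 (x - y')" for y'
  proof
    have "mtrace (mprod (adj2 x) (y' - x))
        = (det2 (x - y') + (mtrace (mprod (adj2 x) y') - 2)) - det2 (x - y') - 2 * (det2 x - 1)"
      by (simp add: mprod_diff_right mtrace_diff mtrace_adj2_self)
    then show "p dvd mtrace (mprod (adj2 x) (y' - x))"
      using det2_diff_SL2[OF x that(1)] that(2) det_x by (simp only:) (blast intro: dvd_diff dvd_mult)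
    have "det2 (mprod (adj2 x) (y' - x)) = det2 x * det2 (x - y')"
      by (simp add: det2_mprod det2_adj2 det2_diff_commute)
    then show "p dvd det2 (mprod (adj2 x) (y' - x))"
      using that(2) by simp
  qed
  have "mprod (adj2 x) (y - x) - mprod (adj2 x) (z - x) = mprod (adj2 x) (y - z)"
    by (simp add: mprod_diff_right)
  then have "p dvd det2 (mprod (adj2 x) (y - x) - mprod (adj2 x) (z - x))"
    using yz by (simp add: det2_mprod)
  then have "parallel_mod p (mprod (adj2 x) (y - x)) (mprod (adj2 x) (z - x))"
    using nilpotent[OF y xy] nilpotent[OF z xz] \<open>prime p\<close> by (blast intro: nilpotent_parallel_mod)
  then show ?thesis
    by (rule parallel_mod_cancel_adj2[OF \<open>prime p\<close> \<open>\<not> p dvd det2 x\<close>])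
qed

lemma card_le_if_singular_differences:
  assumes "prime p" and S: "S \<subseteq> SL2 p" and singular: "\<forall>x\<in>S. \<forall>y\<in>S. p dvd det2 (x - y)"
  shows "card S \<le> nat p"
proof (cases "\<exists>x0\<in>S. \<exists>x1\<in>S. x0 \<noteq> x1")
  case False
  then have "card S \<le> 1"
    using finite_subset[OF S finite_SL2] by (metis card_le_Suc0_iff_eq One_nat_def)
  then show ?thesis
    using prime_ge_2_int[OF \<open>prime p\<close>] by linarith
next
  case True
  then obtain x0 x1 where x0: "x0 \<in> S" and x1: "x1 \<in> S" and "x0 \<noteq> x1"
    by blast
  then obtain w where w: "\<not> p dvd mdot w (x1 - x0)"
    using S SL2_eq_if_mdot_dvd by blast
  have parallel: "parallel_mod p (x1 - x0) (y - x0)" if "y \<in> S" for y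
    using SL2_singular_differences_parallel[OF \<open>prime p\<close>] x0 x1 that S singular by blast
  txt \<open>\<open>S\<close> lies on the line through \<open>x0\<close> with direction \<open>x1 - x0\<close>, on which \<open>mdot w\<close> is
    injective modulo \<open>p\<close>.\<close>
  have inj: "inj_on (\<lambda>y. mdot w y mod p) S"
  proof (rule inj_onI)
    fix y z
    assume y: "y \<in> S" and z: "z \<in> S" and "mdot w y mod p = mdot w z mod p"
    then have "p dvd mdot w ((y - x0) - (z - x0))"
      by (simp add: mdot_diff mod_eq_dvd_iff)
    moreover have "parallel_mod p (x1 - x0) ((y - x0) - (z - x0))"
      using parallel[OF y] parallel[OF z] by (rule parallel_mod_diff_right)
    ultimately have "p dvd mdot w' ((y - x0) - (z - x0))" for w'
      using \<open>prime p\<close> w parallel_mod_dvd_mdot by blast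
    moreover have "mdot w' ((y - x0) - (z - x0)) = mdot w' (y - z)" for w'
      by (simp add: mdot_diff)
    ultimately have "\<forall>w'. p dvd mdot w' (y - z)"
      by simp
    then show "y = z"
      using SL2_eq_if_mdot_dvd y z S by blast
  qed
  have "(\<lambda>y. mdot w y mod p) ` S \<subseteq> {0..<p}"
    using prime_gt_0_int[OF \<open>prime p\<close>] by auto
  then have "card ((\<lambda>y. mdot w y mod p) ` S) \<le> card {0..<p}"
    by (rule card_mono[rotated]) simp
  then show ?thesis
    by (simp add: card_image[OF inj])
qed

definition upper_unitriangular :: "int \<Rightarrow> mat2 set" where
  "upper_unitriangular p = (\<lambda>k. (1, k, 0, 1)) ` {0..<p}"

lemma card_upper_unitriangular: "card (upper_unitriangular p) = nat p"
proof -
  have "inj_on (\<lambda>k::int. (1::int, k, 0::int, 1::int)) {0..<p}"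
    by (rule inj_onI) simp
  then show ?thesis
    unfolding upper_unitriangular_def by (simp add: card_image)
qed

lemma independent_set_upper_unitriangular:
  assumes "p > 1"
  shows "independent_set p (upper_unitriangular p)"
proof -
  have "upper_unitriangular p \<subseteq> SL2 p"
    using assms by (auto simp: upper_unitriangular_def SL2_def)
  moreover have "det2 (x - y) = 0" if "x \<in> upper_unitriangular p" "y \<in> upper_unitriangular p" for x y
    using that by (auto simp: upper_unitriangular_def zero_prod_def)
  ultimately show ?thesis
    using assms by (simp add: independent_set_iff_singular_differences)
qed

lemma independence_number_eq:
  assumes "prime p"
  shows "independence_number p = nat p"
proof -
  have "p > 1"
    using assms by (simp add: prime_gt_1_int)
  define C where "C = {card S | S. independent_set p S}"
  have le: "c \<le> nat p" if "c \<in> C" for c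
    using that card_le_if_singular_differences[OF assms] \<open>p > 1\<close>
    unfolding C_def by (auto simp: independent_set_iff_singular_differences)
  have "nat p \<in> C"
    using independent_set_upper_unitriangular[OF \<open>p > 1\<close>] card_upper_unitriangular[of p]
    unfolding C_def by force
  moreover have "finite C"
    using le by (meson finite_atMost finite_subset atMost_iff subsetI)
  ultimately show ?thesis
    unfolding independence_number_def C_def[symmetric] using le by (intro Max_eqI)
qed

theorem mainTheorem5:
  fixes p :: int
  assumes "prime p"
  shows "p \<le> int (independence_number p) \<and> int (independence_number p) \<le> p + 1"
  using independence_number_eq[OF assms] prime_gt_0_int[OF assms] by simp


end
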